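(* The language $\{\,a^mb^{2^m}\mid m\ge1\,\}$ belongs to $\mathscr{L}_{rt}(\mathrm{SC\text{-}OCA}(n))$, i.e., it is accepted by a real-time one-way cellular automaton whose total number of communications on accepted inputs $w$ is $O(|w|)$.
   Context: A CA is $\langle S,F,A,B,\#,b_l,b_r,\delta\rangle$ with states $S$, accepting states $F$, input alphabet $A\subseteq S$, communication symbols $B$, boundary $\#\notin B$, communication functions $b_l,b_r:S\to B\cup\{\bot\}$ ($\bot$: nothing sent), local transition $\delta:(B\cup\{\#,\bot\})\times S\times(B\cup\{\#,\bot\})\to S$; cells $1..|w|$ start with the input letters and update synchronously by $c_{t+1}(i)=\delta(b_r(c_t(i-1)),c_t(i),b_l(c_t(i+1)))$, outer cells getting $\#$ once at the first step and $\bot$ afterwards. Acceptance: leftmost cell enters $F$. Real time: accepted inputs accepted within $|w|$ steps. OCA: $b_r\equiv\bot$ and the leftmost cell gets no boundary symbol. $\mathrm{com}(i,t)$: number of steps $j<t$ with $b_r(c_j(i))\ne\bot$ or $b_l(c_j(i+1))\ne\bot$; $\mathrm{scom}(w)=\sum_{i=1}^{|w|-1}\mathrm{com}(i,t(|w|))$ with $t$ the time complexity. $\mathrm{SC\text{-}OCA}(f)$: OCAs such that every accepted $w$ is accepted with $\mathrm{scom}(w)\le g(|w|)$ for some $g\in O(f)$. *)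

theory Defs
  imports Main "HOL-Library.Landau_Symbols"
begin

(* Symbols a cell can receive from a neighbour: a communication symbol,
   the boundary symbol #, or nothing (bottom). *)
datatype 'b msg = Sym 'b | Bnd | Bot

(* A cellular automaton <S,F,A,B,#,b_l,b_r,delta>; None encodes "bottom" (nothing sent). *)
record ('s, 'b) ca =
  states    :: "'s set"
  accepting :: "'s set"
  inputs    :: "'s set"
  comms     :: "'b set"
  bl        :: "'s \<Rightarrow> 'b option"
  br        :: "'s \<Rightarrow> 'b option"
  delta     :: "'b msg \<Rightarrow> 's \<Rightarrow> 'b msg \<Rightarrow> 's"

definition valid_msg :: "'b set \<Rightarrow> 'b msg \<Rightarrow> bool" where
  "valid_msg B m \<longleftrightarrow> (case m of Sym b \<Rightarrow> b \<in> B | _ \<Rightarrow> True)"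

definition wf_ca :: "('s, 'b) ca \<Rightarrow> bool" where
  "wf_ca M \<longleftrightarrow> finite (states M) \<and> accepting M \<subseteq> states M \<and> inputs M \<subseteq> states M
     \<and> finite (comms M)
     \<and> (\<forall>s\<in>states M. bl M s \<in> Some ` comms M \<union> {None})
     \<and> (\<forall>s\<in>states M. br M s \<in> Some ` comms M \<union> {None})
     \<and> (\<forall>x s y. valid_msg (comms M) x \<longrightarrow> s \<in> states M \<longrightarrow> valid_msg (comms M) y
              \<longrightarrow> delta M x s y \<in> states M)"

definition to_msg :: "'b option \<Rightarrow> 'b msg" where
  "to_msg o' = (case o' of None \<Rightarrow> Bot | Some b \<Rightarrow> Sym b)"

definition is_oca :: "('s, 'b) ca \<Rightarrow> bool" where
  "is_oca M \<longleftrightarrow> wf_ca M \<and> (\<forall>s. br M s = None)"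

(* Configuration of an OCA at time t on input w; cells are 1..|w|. *)
fun oca_conf :: "('s, 'b) ca \<Rightarrow> 's list \<Rightarrow> nat \<Rightarrow> nat \<Rightarrow> 's" where
  "oca_conf M w 0 i = w ! (i - 1)"
| "oca_conf M w (Suc t) i =
     delta M
       (if i = 1 then Bot else to_msg (br M (oca_conf M w t (i - 1))))
       (oca_conf M w t i)
       (if i = length w then (if t = 0 then Bnd else Bot)
        else to_msg (bl M (oca_conf M w t (i + 1))))"

definition rt_lang :: "('s, 'b) ca \<Rightarrow> 's list set" where
  "rt_lang M = {w. w \<noteq> [] \<and> set w \<subseteq> inputs M \<and>
                   (\<exists>t\<le>length w. oca_conf M w t 1 \<in> accepting M)}"

definition com :: "('s, 'b) ca \<Rightarrow> 's list \<Rightarrow> nat \<Rightarrow> nat \<Rightarrow> nat" where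
  "com M w i t = card {j. j < t \<and> (br M (oca_conf M w j i) \<noteq> None
                                    \<or> bl M (oca_conf M w j (i + 1)) \<noteq> None)}"

definition scom_rt :: "('s, 'b) ca \<Rightarrow> 's list \<Rightarrow> nat" where
  "scom_rt M w = (\<Sum>i=1..length w - 1. com M w i (length w))"

definition rt_SC_OCA :: "(nat \<Rightarrow> real) \<Rightarrow> ('s, 'b) ca \<Rightarrow> bool" where
  "rt_SC_OCA f M \<longleftrightarrow> is_oca M \<and>
     (\<exists>g. g \<in> O(f) \<and> (\<forall>w\<in>rt_lang M. real (scom_rt M w) \<le> g (length w)))"

end

theory Submission
  imports Defs "HOL-Library.Countable"
begin

(* The witness is a real-time OCA that checks a^m b^N for N = 2^m with a binary counter.
   The m a-cells form a counter whose least significant bit sits in the rightmost a-cell;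
   that cell increments once per step until an end signal, sent leftwards at unit speed from
   the right border through the b-cells, reaches it. Carries move one cell left per step, so
   the counter cell holding bit d records the bits of min(t - d, N) at time t. The leftmost
   cell accepts iff its first carry out leaves exactly when the end signal arrives, which
   happens iff N = 2^m; ill-formed inputs create a Dead state that floods to the left.
   Each cell sends only at time 0, once for the end signal, and once per carry; bit d carries
   N / 2^(d+1) times, so for N = 2^m all cells together send at most 3|w| messages. *)

section \<open>One-way automata over arbitrary finite types, encoded into natural numbers\<close>

fun run :: "('m msg \<Rightarrow> 's \<Rightarrow> 's) \<Rightarrow> ('s \<Rightarrow> 'm option) \<Rightarrow> 's list \<Rightarrow> nat \<Rightarrow> nat \<Rightarrow> 's" where
  "run step send w 0 i = w ! (i - 1)"
| "run step send w (Suc t) i = step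
     (if i = length w then (if t = 0 then Bnd else Bot) else to_msg (send (run step send w t (i + 1))))
     (run step send w t i)"

definition nat_oca :: "('m::countable msg \<Rightarrow> 's::countable \<Rightarrow> 's) \<Rightarrow> ('s \<Rightarrow> 'm option)
    \<Rightarrow> 's set \<Rightarrow> 's set \<Rightarrow> (nat, nat) ca" where
  "nat_oca step send acc inp =
     \<lparr> states = range (to_nat :: 's \<Rightarrow> nat), accepting = to_nat ` acc, inputs = to_nat ` inp,
       comms = range (to_nat :: 'm \<Rightarrow> nat), bl = (\<lambda>s. map_option to_nat (send (from_nat s))),
       br = (\<lambda>_. None), delta = (\<lambda>x s y. to_nat (step (map_msg from_nat y) (from_nat s))) \<rparr>"

lemma to_msg_map_option: "to_msg (map_option f o') = map_msg f (to_msg o')"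
  by (cases o') (simp_all add: to_msg_def)

lemma oca_conf_nat_oca:
  "1 \<le> i \<Longrightarrow> i \<le> length w \<Longrightarrow>
   oca_conf (nat_oca step send acc inp) (map to_nat w) t i = to_nat (run step send w t i)"
proof (induction t arbitrary: i)
  case (Suc t)
  then show ?case
    by (cases "i = length w")
       (simp_all add: nat_oca_def to_msg_map_option msg.map_comp comp_def msg.map_ident)
qed simp

lemma is_oca_nat_oca:
  fixes step :: "'m::{countable, finite} msg \<Rightarrow> 's::{countable, finite} \<Rightarrow> 's"
  shows "is_oca (nat_oca step send acc inp)"
proof -
  have "map_option (to_nat :: 'm \<Rightarrow> nat) o' \<in> Some ` range (to_nat :: 'm \<Rightarrow> nat) \<union> {None}" for o' :: "'m option"
    by (cases o') auto
  then show ?thesis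
    unfolding is_oca_def wf_ca_def nat_oca_def by auto
qed

lemma rt_lang_nat_oca:
  fixes step :: "'m::countable msg \<Rightarrow> 's::countable \<Rightarrow> 's"
  shows "rt_lang (nat_oca step send acc inp)
     = map to_nat ` {w. w \<noteq> [] \<and> set w \<subseteq> inp \<and> (\<exists>t\<le>length w. run step send w t 1 \<in> acc)}"
proof (intro set_eqI iffI)
  fix v assume "v \<in> rt_lang (nat_oca step send acc inp)"
  then have v: "v \<noteq> []" "set v \<subseteq> to_nat ` inp"
    and acc: "\<exists>t\<le>length v. oca_conf (nat_oca step send acc inp) v t 1 \<in> to_nat ` acc"
    unfolding rt_lang_def by (auto simp: nat_oca_def)
  define w :: "'s list" where "w = map from_nat v"
  have vw: "v = map to_nat w"
    unfolding w_def using v(2) by (induction v) auto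
  obtain t where t: "t \<le> length v" "oca_conf (nat_oca step send acc inp) v t 1 \<in> to_nat ` acc"
    using acc by blast
  have "oca_conf (nat_oca step send acc inp) v t 1 = to_nat (run step send w t 1)"
    unfolding vw using v(1) vw by (intro oca_conf_nat_oca) (auto simp: Suc_le_eq)
  then have "\<exists>t\<le>length w. run step send w t 1 \<in> acc"
    using t vw by (auto simp: inj_image_mem_iff)
  then show "v \<in> map to_nat ` {w. w \<noteq> [] \<and> set w \<subseteq> inp \<and> (\<exists>t\<le>length w. run step send w t 1 \<in> acc)}"
    using v vw by (auto simp: inj_image_subset_iff)
next
  fix v assume "v \<in> map to_nat ` {w. w \<noteq> [] \<and> set w \<subseteq> inp \<and> (\<exists>t\<le>length w. run step send w t 1 \<in> acc)}"
  then obtain w t where w: "v = map to_nat w" "w \<noteq> []" "set w \<subseteq> inp" "t \<le> length w"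
    and acc: "run step send w t 1 \<in> acc" by blast
  have "oca_conf (nat_oca step send acc inp) v t 1 = to_nat (run step send w t 1)"
    unfolding w(1) using w(2) by (intro oca_conf_nat_oca) (auto simp: Suc_le_eq)
  then show "v \<in> rt_lang (nat_oca step send acc inp)"
    unfolding rt_lang_def using w acc by (auto simp: nat_oca_def)
qed

definition sends :: "('m msg \<Rightarrow> 's \<Rightarrow> 's) \<Rightarrow> ('s \<Rightarrow> 'm option) \<Rightarrow> 's list \<Rightarrow> nat \<Rightarrow> nat \<Rightarrow> nat" where
  "sends step send w i t = card {j. j < t \<and> send (run step send w j i) \<noteq> None}"

(* In a one-way automaton only left messages cross the borders. *)
lemma scom_rt_nat_oca:
  "scom_rt (nat_oca step send acc inp) (map to_nat w)
     = (\<Sum>i=1..length w - 1. sends step send w (i + 1) (length w))"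
  unfolding scom_rt_def com_def sends_def length_map
proof (rule sum.cong[OF refl])
  fix i assume "i \<in> {1..length w - 1}"
  then have "1 \<le> i + 1" "i + 1 \<le> length w" by auto
  note conf = oca_conf_nat_oca[OF this, of step send acc inp]
  show "card {j. j < length w \<and> (br (nat_oca step send acc inp) (oca_conf (nat_oca step send acc inp) (map to_nat w) j i) \<noteq> None
            \<or> bl (nat_oca step send acc inp) (oca_conf (nat_oca step send acc inp) (map to_nat w) j (i + 1)) \<noteq> None)}
      = card {j. j < length w \<and> send (run step send w j (i + 1)) \<noteq> None}"
    unfolding conf by (simp add: nat_oca_def)
qed

section \<open>Binary increment\<close>

lemma bit_Suc: "bit (Suc x) d \<longleftrightarrow> bit x d \<noteq> ((2::nat)^d dvd Suc x)"
  unfolding bit_iff_odd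
proof (cases "2^d dvd Suc x")
  case False
  then have "Suc x mod 2^d \<noteq> 0" by (simp add: dvd_eq_mod_eq_0)
  with False show "odd (Suc x div 2^d) \<longleftrightarrow> odd (x div 2^d) \<noteq> (2^d dvd Suc x)"
    by (simp add: div_Suc)
qed (auto simp: div_Suc)

lemma carry_Suc: "(2::nat)^Suc d dvd Suc x \<longleftrightarrow> bit x d \<and> 2^d dvd Suc x"
proof (cases "2^d dvd Suc x")
  case True
  then obtain k where k: "Suc x = 2^d * k" by blast
  then have "k \<ge> 1" by (cases k) auto
  have "x = (2^d - 1) + (k - 1) * 2^d" using k \<open>k \<ge> 1\<close>
    by (cases k) (auto simp: algebra_simps)
  then have "x div 2^d = (k - 1) + (2^d - 1) div 2^d"
    by (simp only: div_mult_self1 power_not_zero zero_neq_numeral not_False_eq_True)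
  then have "x div 2^d = k - 1" by simp
  moreover have "2^Suc d dvd Suc x \<longleftrightarrow> even k" using k by auto
  ultimately show ?thesis using True \<open>k \<ge> 1\<close> by (cases k) (auto simp: bit_iff_odd)
next
  case False
  then show ?thesis by (metis dvd_mult_left power_Suc mult.commute)
qed

section \<open>The automaton\<close>

(* Messages: the letters announced at time 0, a counter pulse carrying a carry flag and an
   end-signal flag, and the kill message of dead cells. *)
datatype signal = SigA | SigB | Pulse bool bool | Kill

(* Counter lsb bit carry carried endnow endseen acc is an a-cell of the counter: lsb marks
   the rightmost a-cell, bit is its counter bit, carry says it emits a carry now, carried
   that it has emitted one before, endnow/endseen that the end signal arrives now/has
   arrived, acc that the cell accepts. Relay endnow is a b-cell forwarding the end signal. *)
datatype cell = LetterA | LetterB | Dead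
  | Counter bool bool bool bool bool bool bool
  | Relay bool

instance signal :: countable by countable_datatype
instance cell :: countable by countable_datatype

instance signal :: finite
proof
  have "(UNIV :: signal set) \<subseteq> {SigA, SigB, Kill} \<union> range (case_prod Pulse)"
  proof
    fix x :: signal show "x \<in> {SigA, SigB, Kill} \<union> range (case_prod Pulse)"
      by (cases x) (auto simp: image_iff)
  qed
  then show "finite (UNIV :: signal set)" by (rule finite_subset) auto
qed

instance cell :: finite
proof
  have "(UNIV :: cell set) \<subseteq> {LetterA, LetterB, Dead}
      \<union> range (\<lambda>(l, b, c, s, en, es, acc). Counter l b c s en es acc) \<union> range Relay"
  proof
    fix x :: cell show "x \<in> {LetterA, LetterB, Dead}
      \<union> range (\<lambda>(l, b, c, s, en, es, acc). Counter l b c s en es acc) \<union> range Relay"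
      by (cases x) (auto simp: image_iff)
  qed
  then show "finite (UNIV :: cell set)" by (rule finite_subset) auto
qed

fun send_left :: "cell \<Rightarrow> signal option" where
  "send_left LetterA = Some SigA"
| "send_left LetterB = Some SigB"
| "send_left Dead = Some Kill"
| "send_left (Counter l b c s en es acc) = (if c \<or> en then Some (Pulse c en) else None)"
| "send_left (Relay en) = (if en then Some (Pulse False en) else None)"

(* Update of a counter cell receiving carry c' and end flag e: the lsb cell increments
   while no end signal has been seen, the others add the incoming carry; the cell accepts
   when the end signal arrives right after its first carry. *)
definition counter_update :: "bool \<Rightarrow> bool \<Rightarrow> bool \<Rightarrow> bool \<Rightarrow> bool \<Rightarrow> bool \<Rightarrow> bool \<Rightarrow> cell" where
  "counter_update l b c s es c' e = (let es' = es \<or> e; inc = (if l then \<not> es' else c')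
     in Counter l (b \<noteq> inc) (b \<and> inc) (s \<or> c) e es' (e \<and> c \<and> \<not> s))"

(* At time 0 an a-cell learns whether it is the rightmost a-cell; a b-cell followed by an
   a-cell, an a-cell at the right border, and every cell receiving a kill message die. *)
fun transition :: "signal msg \<Rightarrow> cell \<Rightarrow> cell" where
  "transition r LetterA = (case r of Sym SigB \<Rightarrow> Counter True True False False False False False
     | Sym SigA \<Rightarrow> Counter False False False False False False False | _ \<Rightarrow> Dead)"
| "transition r LetterB = (case r of Sym SigB \<Rightarrow> Relay False | Bnd \<Rightarrow> Relay True | _ \<Rightarrow> Dead)"
| "transition r Dead = Dead"
| "transition r (Counter l b c s en es acc) = (case r of
       Sym (Pulse c' e) \<Rightarrow> counter_update l b c s es c' e
     | Bot \<Rightarrow> counter_update l b c s es False False | _ \<Rightarrow> Dead)"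
| "transition r (Relay en) = (case r of Sym (Pulse c' e) \<Rightarrow> Relay e | Bot \<Rightarrow> Relay False | _ \<Rightarrow> Dead)"

fun accepting_cell :: "cell \<Rightarrow> bool" where
  "accepting_cell (Counter l b c s en es acc) = acc"
| "accepting_cell _ = False"

abbreviation conf :: "cell list \<Rightarrow> nat \<Rightarrow> nat \<Rightarrow> cell" where
  "conf \<equiv> run transition send_left"

abbreviation word :: "nat \<Rightarrow> nat \<Rightarrow> cell list" where
  "word m N \<equiv> replicate m LetterA @ replicate N LetterB"

section \<open>The run on well-formed inputs\<close>

(* The counter cell holding bit d works with a delay of d steps and stops counting at N:
   at time t its bit is bit d of min (t - d) N; it emits a carry at time t iff the
   (t - d)-th increment clears bits 0..d; carried_before says this already happened. *)
definition counter_bit :: "nat \<Rightarrow> nat \<Rightarrow> nat \<Rightarrow> bool" where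
  "counter_bit N d t \<longleftrightarrow> bit (min (t - d) N) d"

definition carry_out :: "nat \<Rightarrow> nat \<Rightarrow> nat \<Rightarrow> bool" where
  "carry_out N d t \<longleftrightarrow> d < t \<and> t \<le> N + d \<and> 2^(Suc d) dvd (t - d)"

definition carried_before :: "nat \<Rightarrow> nat \<Rightarrow> nat \<Rightarrow> bool" where
  "carried_before N d t \<longleftrightarrow> 2^(Suc d) \<le> N \<and> 2^(Suc d) + d < t"

lemma carried_before_Suc: "carried_before N d (Suc t) \<longleftrightarrow> carried_before N d t \<or> carry_out N d t"
proof
  assume h: "carried_before N d (Suc t)"
  show "carried_before N d t \<or> carry_out N d t"
  proof (cases "2^(Suc d) + d < t")
    case False
    then have "t = 2^(Suc d) + d" using h unfolding carried_before_def by simp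
    then show ?thesis using h unfolding carried_before_def carry_out_def by simp
  qed (use h in \<open>simp add: carried_before_def\<close>)
next
  assume h: "carried_before N d t \<or> carry_out N d t"
  show "carried_before N d (Suc t)"
  proof (cases "carry_out N d t")
    case True
    then have c: "d < t" "t \<le> N + d" "2^(Suc d) dvd (t - d)" unfolding carry_out_def by auto
    then have "2^(Suc d) \<le> t - d" by (intro dvd_imp_le) auto
    then show ?thesis using c unfolding carried_before_def by linarith
  qed (use h in \<open>simp add: carried_before_def\<close>)
qed

lemma counter_step:
  assumes "d \<ge> 1"
  shows "counter_bit N d (Suc t) \<longleftrightarrow> counter_bit N d t \<noteq> carry_out N (d - 1) t"
    and "carry_out N d (Suc t) \<longleftrightarrow> counter_bit N d t \<and> carry_out N (d - 1) t"
proof -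
  have "(counter_bit N d (Suc t) \<longleftrightarrow> counter_bit N d t \<noteq> carry_out N (d - 1) t) \<and>
        (carry_out N d (Suc t) \<longleftrightarrow> counter_bit N d t \<and> carry_out N (d - 1) t)"
  proof (cases "t < d")
    case True
    then show ?thesis unfolding counter_bit_def carry_out_def using assms by auto
  next
    case False
    define x where "x = t - d"
    have t: "t = x + d" and st: "Suc t - d = Suc x" using False x_def by auto
    have c: "carry_out N (d - 1) t \<longleftrightarrow> Suc x \<le> N \<and> 2^d dvd Suc x"
      unfolding carry_out_def t using assms by auto
    have c': "carry_out N d (Suc t) \<longleftrightarrow> Suc x \<le> N \<and> 2^(Suc d) dvd Suc x"
      unfolding carry_out_def t by auto
    show ?thesis
    proof (cases "Suc x \<le> N")
      case True
      then have m: "min (Suc x) N = Suc x" "min (t - d) N = x" using t by auto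
      show ?thesis unfolding c c' counter_bit_def st m bit_Suc carry_Suc using True by blast
    next
      case False
      then have m: "min (Suc x) N = N" "min (t - d) N = N" using t by auto
      show ?thesis unfolding c c' counter_bit_def st m using False by blast
    qed
  qed
  then show "counter_bit N d (Suc t) \<longleftrightarrow> counter_bit N d t \<noteq> carry_out N (d - 1) t"
    and "carry_out N d (Suc t) \<longleftrightarrow> counter_bit N d t \<and> carry_out N (d - 1) t" by auto
qed

lemma counter_step_lsb:
  shows "counter_bit N 0 (Suc t) \<longleftrightarrow> counter_bit N 0 t \<noteq> (Suc t \<le> N)"
    and "carry_out N 0 (Suc t) \<longleftrightarrow> counter_bit N 0 t \<and> Suc t \<le> N"
  unfolding counter_bit_def carry_out_def by (cases "t = N"; auto simp: min_def bit_0)+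

(* State of cell i at time t \<ge> 1 on input a^m b^N: the end signal reaches cell i at time
   m + N + 1 - i, and the counter cell i holds bit m - i. *)
definition expected :: "nat \<Rightarrow> nat \<Rightarrow> nat \<Rightarrow> nat \<Rightarrow> cell" where
  "expected m N t i = (if i \<le> m
     then Counter (i = m) (counter_bit N (m - i) t) (carry_out N (m - i) t)
       (carried_before N (m - i) t) (t = m + N + 1 - i) (m + N + 1 - i \<le> t)
       (2 \<le> t \<and> t = m + N + 1 - i \<and> carry_out N (m - i) (t - 1) \<and> \<not> carried_before N (m - i) (t - 1))
     else Relay (t = m + N + 1 - i))"

lemma transition_pulse:
  "transition (to_msg (if c \<or> e then Some (Pulse c e) else None)) (Counter l b c0 s en es acc)
     = counter_update l b c0 s es c e"
  by (auto simp: to_msg_def)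

lemma expected_step_counter:
  assumes "i < m"
  shows "transition (to_msg (send_left (expected m N (Suc t) (i + 1)))) (expected m N (Suc t) i)
    = expected m N (Suc (Suc t)) i"
proof -
  define d where "d = m - i"
  have d: "m - (i + 1) = d - 1" "d \<ge> 1" using assms d_def by auto
  have now: "expected m N (Suc t) i = Counter False (counter_bit N d (Suc t)) (carry_out N d (Suc t))
      (carried_before N d (Suc t)) (Suc t = m + N + 1 - i) (m + N + 1 - i \<le> Suc t)
      (2 \<le> Suc t \<and> Suc t = m + N + 1 - i \<and> carry_out N d t \<and> \<not> carried_before N d t)"
    using assms unfolding expected_def d_def by simp
  have msg: "send_left (expected m N (Suc t) (i + 1))
      = (if carry_out N (d - 1) (Suc t) \<or> Suc t = m + N + 1 - (i + 1)
         then Some (Pulse (carry_out N (d - 1) (Suc t)) (Suc t = m + N + 1 - (i + 1))) else None)"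
    using assms d unfolding expected_def by simp
  have next_: "expected m N (Suc (Suc t)) i = Counter False (counter_bit N d (Suc (Suc t)))
      (carry_out N d (Suc (Suc t))) (carried_before N d (Suc (Suc t)))
      (Suc (Suc t) = m + N + 1 - i) (m + N + 1 - i \<le> Suc (Suc t))
      (2 \<le> Suc (Suc t) \<and> Suc (Suc t) = m + N + 1 - i \<and> carry_out N d (Suc t) \<and> \<not> carried_before N d (Suc t))"
    using assms unfolding expected_def d_def by simp
  have e: "(Suc t = m + N + 1 - (i + 1)) = (Suc (Suc t) = m + N + 1 - i)" using assms by auto
  have e': "(m + N + 1 - i \<le> Suc t \<or> Suc (Suc t) = m + N + 1 - i) = (m + N + 1 - i \<le> Suc (Suc t))"
    by auto
  show ?thesis
    unfolding now msg next_ transition_pulse counter_update_def Let_def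
      counter_step[OF d(2), of N "Suc t"] carried_before_Suc[of N d "Suc t"] e e'
    by simp
qed

lemma expected_step_lsb:
  shows "transition (to_msg (send_left (expected m N (Suc t) (m + 1)))) (expected m N (Suc t) m)
    = expected m N (Suc (Suc t)) m"
proof -
  have now: "expected m N (Suc t) m = Counter True (counter_bit N 0 (Suc t)) (carry_out N 0 (Suc t))
      (carried_before N 0 (Suc t)) (Suc t = N + 1) (N + 1 \<le> Suc t)
      (2 \<le> Suc t \<and> Suc t = N + 1 \<and> carry_out N 0 t \<and> \<not> carried_before N 0 t)"
    unfolding expected_def by simp
  have msg: "send_left (expected m N (Suc t) (m + 1))
      = (if False \<or> Suc t = N then Some (Pulse False (Suc t = N)) else None)"
    unfolding expected_def by simp
  have next_: "expected m N (Suc (Suc t)) m = Counter True (counter_bit N 0 (Suc (Suc t)))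
      (carry_out N 0 (Suc (Suc t))) (carried_before N 0 (Suc (Suc t))) (Suc (Suc t) = N + 1)
      (N + 1 \<le> Suc (Suc t))
      (2 \<le> Suc (Suc t) \<and> Suc (Suc t) = N + 1 \<and> carry_out N 0 (Suc t) \<and> \<not> carried_before N 0 (Suc t))"
    unfolding expected_def by simp
  have e: "(N + 1 \<le> Suc t \<or> Suc t = N) = (N + 1 \<le> Suc (Suc t))" by auto
  show ?thesis
    unfolding now msg next_ transition_pulse counter_update_def Let_def
      counter_step_lsb[of N "Suc t"] carried_before_Suc[of N 0 "Suc t"] e
    by auto
qed

lemma conf_expected:
  assumes "m \<ge> 1" "N \<ge> 1" "1 \<le> i" "i \<le> m + N"
  shows "conf (word m N) (Suc t) i = expected m N (Suc t) i"
  using assms(3,4)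
proof (induction t arbitrary: i)
  case 0
  have letter: "word m N ! (j - 1) = (if j \<le> m then LetterA else LetterB)"
    if "1 \<le> j" "j \<le> m + N" for j
    using that by (auto simp: nth_append)
  show ?case
  proof (cases "i = m + N")
    case True
    then show ?thesis using 0 assms(1,2) letter[of i] by (simp add: expected_def)
  next
    case False
    then have right: "word m N ! i = (if i + 1 \<le> m then LetterA else LetterB)"
      using letter[of "i + 1"] 0 by simp
    consider "i < m" | "i = m" | "m < i" by linarith
    then show ?thesis
      using 0 False right letter[of i] assms(1,2)
      by cases (auto simp: expected_def to_msg_def counter_bit_def carry_out_def carried_before_def bit_0)
  qed
next
  case (Suc t)
  have cur: "conf (word m N) (Suc t) i = expected m N (Suc t) i" using Suc by blast
  show ?case
  proof (cases "i = m + N")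
    case True
    then show ?thesis using cur assms(1,2) by (simp add: expected_def to_msg_def)
  next
    case False
    then have "conf (word m N) (Suc t) (i + 1) = expected m N (Suc t) (i + 1)" using Suc by simp
    then have step: "conf (word m N) (Suc (Suc t)) i
        = transition (to_msg (send_left (expected m N (Suc t) (i + 1)))) (expected m N (Suc t) i)"
      using cur False by simp
    consider "i < m" | "i = m" | "m < i" by linarith
    then show ?thesis
    proof cases
      case 1 then show ?thesis unfolding step by (rule expected_step_counter)
    next
      case 2 then show ?thesis unfolding step using expected_step_lsb by simp
    next
      case 3 then show ?thesis unfolding step by (auto simp: expected_def to_msg_def)
    qed
  qed
qed

(* The leftmost cell accepts exactly when its first carry leaves at time |w| - 1, i.e. when
   2^m divides N and no carry left earlier, which means N = 2^m. *)
lemma accepts_word_iff: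
  assumes m: "m \<ge> 1" and N: "N \<ge> 1"
  shows "(\<exists>t\<le>m + N. accepting_cell (conf (word m N) t 1)) \<longleftrightarrow> N = 2^m"
proof -
  have acc: "accepting_cell (conf (word m N) t 1) \<longleftrightarrow> t = m + N \<and> 2^m dvd N \<and> \<not> 2^m < N"
    if "t \<le> m + N" for t
  proof (cases t)
    case 0
    then show ?thesis using m N by (simp add: nth_append)
  next
    case (Suc t')
    have "conf (word m N) t 1 = expected m N t 1" using conf_expected[OF m N, of 1 t'] Suc m by simp
    moreover have "m - 1 < m + N - 1" "m + N - 1 \<le> N + (m - 1)" "m + N - 1 - (m - 1) = N"
      "Suc (m - 1) = m" using m N by auto
    moreover have "(2^m + (m - 1) < m + N - 1) = (2^m < N)" using m by auto
    ultimately show ?thesis using m N Suc that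
      unfolding expected_def carry_out_def carried_before_def by (auto simp del: power_Suc)
  qed
  have "(2^m dvd N \<and> \<not> 2^m < N) \<longleftrightarrow> N = 2^m"
    using N by (auto dest: dvd_imp_le)
  then show ?thesis using acc by auto
qed

section \<open>Ill-formed inputs are rejected\<close>

(* A cell starting with letter b only ever relays or dies, so it never accepts. *)
lemma b_cell_never_accepts:
  assumes "w ! (i - 1) = LetterB"
  shows "\<not> accepting_cell (conf w t i)"
proof -
  have "conf w t i \<in> {LetterB, Dead} \<union> range Relay"
    by (induction t) (use assms in \<open>auto split: msg.splits signal.splits\<close>)
  then show ?thesis by auto
qed

lemma transition_Kill: "transition (Sym Kill) s = Dead"
  by (cases s) auto

lemma dead_stays_dead: "conf w t i = Dead \<Longrightarrow> conf w (t + j) i = Dead"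
  by (induction j) auto

lemma dead_spreads_left:
  assumes "conf w t k = Dead" "k \<le> length w"
  shows "j < k \<Longrightarrow> conf w (t + j) (k - j) = Dead"
proof (induction j)
  case (Suc j)
  then have "conf w (t + j) (Suc (k - Suc j)) = Dead" by (simp add: Suc_diff_Suc)
  moreover have "k - Suc j \<noteq> length w" using assms Suc by simp
  ultimately show ?case by (simp add: to_msg_def transition_Kill)
qed (use assms in simp)

fun sees_end :: "cell \<Rightarrow> bool" where
  "sees_end (Counter l b c s en es acc) = (en \<or> acc)"
| "sees_end (Relay en) = en"
| "sees_end _ = False"

lemma sees_end_transition: "sees_end (transition r s) \<Longrightarrow> r = Bnd \<or> (\<exists>c. r = Sym (Pulse c True))"
  by (cases s) (auto simp: counter_update_def Let_def split: msg.splits signal.splits)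

lemma sees_end_sender: "send_left s = Some (Pulse c True) \<Longrightarrow> sees_end s"
  by (cases s) (auto split: if_splits)

lemma end_signal_time:
  assumes "set w \<subseteq> {LetterA, LetterB}"
  shows "1 \<le> i \<Longrightarrow> i \<le> length w \<Longrightarrow> sees_end (conf w t i) \<Longrightarrow> length w + 1 \<le> t + i"
proof (induction t arbitrary: i)
  case 0
  then have "w ! (i - 1) \<in> set w" by (intro nth_mem) simp
  then have "w ! (i - 1) \<in> {LetterA, LetterB}" using assms by blast
  then have "\<not> sees_end (conf w 0 i)" by auto
  then show ?case using 0 by blast
next
  case (Suc t)
  let ?r = "if i = length w then (if t = 0 then Bnd else Bot) else to_msg (send_left (conf w t (i + 1)))"
  have "sees_end (transition ?r (conf w t i))" using Suc.prems by simp
  then have r: "?r = Bnd \<or> (\<exists>c. ?r = Sym (Pulse c True))" by (rule sees_end_transition)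
  show ?case
  proof (cases "i = length w")
    case False
    then obtain c where "send_left (conf w t (i + 1)) = Some (Pulse c True)"
      using r by (auto simp: to_msg_def split: option.splits)
    then have "sees_end (conf w t (i + 1))" by (rule sees_end_sender)
    then show ?thesis using Suc.IH[of "i + 1"] Suc.prems False by simp
  qed (use r in \<open>auto split: if_splits\<close>)
qed

lemma two_blocks:
  "set w \<subseteq> {a, b} \<Longrightarrow> (\<forall>k. Suc k < length w \<longrightarrow> \<not> (w ! k = b \<and> w ! Suc k = a))
   \<Longrightarrow> \<exists>m N. w = replicate m a @ replicate N b"
proof (induction w)
  case Nil show ?case by (intro exI[of _ 0]) simp
next
  case (Cons x w)
  have "\<forall>k. Suc k < length w \<longrightarrow> \<not> (w ! k = b \<and> w ! Suc k = a)"
    using Cons.prems(2) by (metis Suc_less_eq length_Cons nth_Cons_Suc)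
  then obtain m N where w: "w = replicate m a @ replicate N b" using Cons by auto
  show ?case
  proof (cases "x = a")
    case True
    then show ?thesis using w by (intro exI[of _ "Suc m"] exI[of _ N]) simp
  next
    case False
    then have x: "x = b" using Cons.prems by auto
    have "m = 0"
    proof (rule ccontr)
      assume "m \<noteq> 0"
      then have "w ! 0 = a" "0 < length w" using w by (auto simp: nth_append)
      then show False using Cons.prems(2)[rule_format, of 0] x by simp
    qed
    then show ?thesis using w x by (intro exI[of _ 0] exI[of _ "Suc N"]) simp
  qed
qed

(* If a word starting with a is not of the form a^m b^N (m, N \<ge> 1), then it contains a
   factor b a or ends with a, and the cell responsible dies at time 1. *)
lemma ill_formed_dies:
  assumes ws: "set w \<subseteq> {LetterA, LetterB}" and "w \<noteq> []" and first: "w ! 0 = LetterA"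
    and ill: "\<not> (\<exists>m N. m \<ge> 1 \<and> N \<ge> 1 \<and> w = word m N)"
  shows "\<exists>k. 1 \<le> k \<and> k \<le> length w \<and> conf w 1 k = Dead"
proof (cases "\<exists>k. Suc k < length w \<and> w ! k = LetterB \<and> w ! Suc k = LetterA")
  case True
  then obtain k where k: "Suc k < length w" "w ! k = LetterB" "w ! Suc k = LetterA" by blast
  then have "conf w 1 (Suc k) = Dead" by (simp add: to_msg_def)
  then show ?thesis using k by (intro exI[of _ "Suc k"]) simp
next
  case False
  then obtain m N where w: "w = word m N" using two_blocks[OF ws] by blast
  have "m \<ge> 1" using first w \<open>w \<noteq> []\<close> by (cases m; cases N) (auto simp: nth_append)
  have "N = 0"
  proof (rule ccontr)
    assume "N \<noteq> 0"
    then have "m \<ge> 1 \<and> N \<ge> 1 \<and> w = word m N" using \<open>m \<ge> 1\<close> w by simp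
    then show False using ill by blast
  qed
  then have "conf w 1 (length w) = Dead" using w \<open>w \<noteq> []\<close> by simp
  then show ?thesis using \<open>w \<noteq> []\<close> by (intro exI[of _ "length w"]) (auto simp: Suc_le_eq)
qed

(* Acceptance needs the end signal, hence happens only at time |w|; by then the dead state
   of an ill-formed word has reached the leftmost cell. *)
lemma ill_formed_rejected:
  assumes ws: "set w \<subseteq> {LetterA, LetterB}" and ne: "w \<noteq> []"
    and ill: "\<not> (\<exists>m N. m \<ge> 1 \<and> N \<ge> 1 \<and> w = word m N)"
    and t: "t \<le> length w"
  shows "\<not> accepting_cell (conf w t 1)"
proof
  assume acc: "accepting_cell (conf w t 1)"
  have "1 \<le> length w" using ne by (cases w) auto
  moreover have "sees_end (conf w t 1)" using acc by (cases "conf w t 1") auto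
  ultimately have tn: "t = length w" using end_signal_time[OF ws, of 1 t] t by auto
  have "w ! 0 \<noteq> LetterB" using b_cell_never_accepts[of w 1 t] acc by auto
  then have "w ! 0 = LetterA" using ws ne by (meson insertE nth_mem length_greater_0_conv subsetD singletonD)
  then obtain k where k: "1 \<le> k" "k \<le> length w" "conf w 1 k = Dead"
    using ill_formed_dies[OF ws ne _ ill] by blast
  then have "conf w k 1 = Dead" using dead_spreads_left[OF k(3) k(2), of "k - 1"] by simp
  then have "conf w (k + (length w - k)) 1 = Dead" by (rule dead_stays_dead)
  then show False using acc tn k by simp
qed

lemma accepted_words:
  "{w. w \<noteq> [] \<and> set w \<subseteq> {LetterA, LetterB} \<and> (\<exists>t\<le>length w. accepting_cell (conf w t 1))}
     = {word m (2^m) | m. m \<ge> 1}"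
proof (intro set_eqI iffI)
  fix w assume "w \<in> {w. w \<noteq> [] \<and> set w \<subseteq> {LetterA, LetterB} \<and> (\<exists>t\<le>length w. accepting_cell (conf w t 1))}"
  then have w: "set w \<subseteq> {LetterA, LetterB}" "w \<noteq> []" and "\<exists>t\<le>length w. accepting_cell (conf w t 1)"
    by auto
  then obtain m N where mN: "m \<ge> 1" "N \<ge> 1" "w = word m N"
    using ill_formed_rejected[OF w] by blast
  then have "N = 2^m" using accepts_word_iff[OF mN(1,2)] \<open>\<exists>t\<le>length w. _\<close> by auto
  then show "w \<in> {word m (2^m) | m. m \<ge> 1}" using mN by auto
next
  fix w assume "w \<in> {word m (2^m) | m. m \<ge> 1}"
  then obtain m where "m \<ge> 1" "w = word m (2^m)" by auto
  then show "w \<in> {w. w \<noteq> [] \<and> set w \<subseteq> {LetterA, LetterB} \<and> (\<exists>t\<le>length w. accepting_cell (conf w t 1))}"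
    using accepts_word_iff[of m "2^m"] by auto
qed

section \<open>Counting the communications\<close>

(* The cell holding bit d emits a carry after every 2^(d+1)-th increment. *)
lemma card_carry_out: "card {t. carry_out N d t} \<le> N div 2^Suc d"
proof -
  have "{t. carry_out N d t} \<subseteq> (\<lambda>k. d + 2^Suc d * k) ` {1..N div 2^Suc d}"
  proof
    fix t assume "t \<in> {t. carry_out N d t}"
    then have t: "d < t" "t - d \<le> N" "2^Suc d dvd (t - d)" unfolding carry_out_def by auto
    then obtain k where k: "t - d = 2^Suc d * k" by blast
    have "k \<ge> 1" using k t(1) by (cases k) auto
    moreover have "k \<le> N div 2^Suc d"
      using div_le_mono[OF t(2), of "2^Suc d"] by (simp add: k del: power_Suc)
    ultimately show "t \<in> (\<lambda>k. d + 2^Suc d * k) ` {1..N div 2^Suc d}"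
      using k t(1) by (intro image_eqI[of _ _ k]) auto
  qed
  then have "card {t. carry_out N d t} \<le> card ((\<lambda>k. d + 2^Suc d * k) ` {1..N div 2^Suc d})"
    by (intro card_mono) auto
  also have "\<dots> \<le> card {1..N div 2^Suc d}" by (rule card_image_le) simp
  finally show ?thesis by simp
qed

abbreviation messages :: "nat \<Rightarrow> nat \<Rightarrow> nat \<Rightarrow> nat" where
  "messages m N c \<equiv> sends transition send_left (word m N) c (m + N)"

(* Besides its carries, cell c sends only at time 0 and when the end signal passes. *)
lemma messages_per_cell:
  assumes m: "m \<ge> 1" and N: "N \<ge> 1" and c: "2 \<le> c" "c \<le> m + N"
  shows "messages m N c \<le> 2 + (if c \<le> m then N div 2^Suc (m - c) else 0)"
proof -
  let ?S = "{j. j < m + N \<and> send_left (conf (word m N) j c) \<noteq> None}"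
  let ?C = "{j. c \<le> m \<and> carry_out N (m - c) j}"
  have sub: "?S \<subseteq> {0, m + N + 1 - c} \<union> ?C"
  proof
    fix j assume j: "j \<in> ?S"
    show "j \<in> {0, m + N + 1 - c} \<union> ?C"
    proof (cases j)
      case (Suc j')
      have "conf (word m N) j c = expected m N j c" using conf_expected[OF m N, of c j'] c Suc by simp
      then show ?thesis using j unfolding expected_def by (auto split: if_splits)
    qed simp
  qed
  have "finite ?C" unfolding carry_out_def by (rule finite_subset[of _ "{..N + (m - c)}"]) auto
  then have "card ?S \<le> card ({0, m + N + 1 - c} \<union> ?C)" by (intro card_mono[OF _ sub]) auto
  also have "\<dots> \<le> card {0, m + N + 1 - c} + card ?C" by (rule card_Un_le)
  also have "\<dots> \<le> 2 + (if c \<le> m then N div 2^Suc (m - c) else 0)"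
    using card_carry_out[of N "m - c"] by (auto simp: card_insert_le_m1 simp del: power_Suc)
  finally show ?thesis unfolding sends_def .
qed

(* For N = 2^m the carries of cell c number 2^(c-1); summing a geometric series, all
   cells together send at most 3 |w| messages. *)
lemma total_messages:
  assumes m: "m \<ge> 1"
  shows "(\<Sum>i=1..m + 2^m - 1. messages m (2^m) (i + 1)) \<le> 3 * (m + 2^m)"
proof -
  let ?n = "m + 2^m"
  define f :: "nat \<Rightarrow> nat" where "f i = (if i < m then 2^i else 0)" for i
  have "(\<Sum>i=1..?n - 1. messages m (2^m) (i + 1)) \<le> (\<Sum>i=1..?n - 1. 2 + f i)"
  proof (rule sum_mono)
    fix i assume "i \<in> {1..?n - 1}"
    then have i: "2 \<le> i + 1" "i + 1 \<le> ?n" by auto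
    have "(2::nat)^m div 2^Suc (m - (i + 1)) = 2^i" if "i < m"
    proof -
      have "Suc (m - (i + 1)) = m - i" "(2::nat)^m = 2^i * 2^(m - i)"
        using that by (auto simp flip: power_add)
      then show ?thesis by simp
    qed
    then show "messages m (2^m) (i + 1) \<le> 2 + f i"
      using messages_per_cell[OF m _ i] unfolding f_def by (auto simp del: power_Suc)
  qed
  also have "\<dots> = 2 * (?n - 1) + (\<Sum>i=1..?n - 1. f i)" unfolding sum.distrib by simp
  also have "(\<Sum>i=1..?n - 1. f i) \<le> (\<Sum>i<?n. f i)" by (rule sum_mono2) auto
  also have "(\<Sum>i<?n. f i) = (\<Sum>i<m. 2^i)"
    unfolding f_def by (rule sum.mono_neutral_cong_right) auto
  also have "(\<Sum>i<m. (2::nat)^i) = 2^m - 1" unfolding lessThan_def by (rule mask_eq_sum_exp[symmetric])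
  finally show ?thesis by simp
qed

definition doubling_oca :: "(nat, nat) ca" where
  "doubling_oca = nat_oca transition send_left {s. accepting_cell s} {LetterA, LetterB}"

lemma rt_lang_doubling_oca: "rt_lang doubling_oca = map to_nat ` {word m (2^m) | m. m \<ge> 1}"
  unfolding doubling_oca_def using rt_lang_nat_oca[of transition send_left] accepted_words by simp

lemma scom_doubling_oca:
  assumes "w \<in> rt_lang doubling_oca"
  shows "real (scom_rt doubling_oca w) \<le> 3 * real (length w)"
proof -
  obtain v where v: "v \<in> {word m (2^m) | m. m \<ge> 1}" and w: "w = map to_nat v"
    using assms unfolding rt_lang_doubling_oca by (rule imageE)
  then obtain m where m: "m \<ge> 1" and "v = word m (2^m)" by blast
  then have "scom_rt doubling_oca w \<le> 3 * length w"
    unfolding w doubling_oca_def scom_rt_nat_oca using total_messages[OF m] by simp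
  then show ?thesis by linarith
qed

theorem mainTheorem7:
  shows "\<exists>(M :: (nat, nat) ca) a b. a \<noteq> b \<and> inputs M = {a, b} \<and>
           rt_SC_OCA (\<lambda>n. real n) M \<and>
           rt_lang M = {replicate m a @ replicate (2 ^ m) b | m. m \<ge> 1}"
proof (intro exI conjI)
  show "to_nat LetterA \<noteq> to_nat LetterB"
    and "inputs doubling_oca = {to_nat LetterA, to_nat LetterB}"
    by (simp_all add: doubling_oca_def nat_oca_def)
  show "rt_lang doubling_oca
      = {replicate m (to_nat LetterA) @ replicate (2^m) (to_nat LetterB) | m. m \<ge> 1}"
    unfolding rt_lang_doubling_oca
    by (auto simp: image_Collect) (rule_tac x = "word m (2^m)" in exI, auto)
  have "(\<lambda>n. 3 * real n) \<in> O(\<lambda>n. real n)" by (intro bigoI[of _ 3]) simp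
  then show "rt_SC_OCA (\<lambda>n. real n) doubling_oca"
    unfolding rt_SC_OCA_def doubling_oca_def
    using is_oca_nat_oca scom_doubling_oca[unfolded doubling_oca_def] by blast
qed

end
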